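(* Let $G$ be a connected graph and $r\in\mathbb{N}$, and let $G_r$ be its $r$-local cover. Then $\mathcal{Z}_r(G_r)=\mathcal{Z}(G_r)$, both for the integral and for the binary cycle space.
   Context: Graphs may have loops and parallel edges and are viewed as 1-complexes; a cycle may be a loop or a pair of parallel edges; a closed walk once around a cycle $O$ traverses every edge of $O$ exactly once. $\pi_1^r(G,x_0)$ is the subgroup of $\pi_1(G,x_0)$ generated by the classes of closed walks $W_0QW_0^-$, $W_0$ a walk from $x_0$ to a vertex $y$, $Q$ a closed walk at $y$ once around a cycle of length at most $r$, $W_0^-$ the reverse of $W_0$. The $r$-local covering $p_r:G_r\to G$ is the connected normal covering with characteristic subgroup $\pi_1^r(G,x_0)$. Cycle spaces: fix an orientation $\vec e$ of each edge of a graph $X$. For $R=\mathbb{Z}$ (integral) or $R=\mathbb{Z}/2\mathbb{Z}$ (binary), $\mathcal{Z}(X)$ is the $R$-module of finitely supported functions $E(X)\to R$ such that at every vertex the sum of values of incoming edges equals the sum over outgoing edges. A closed walk $W=v_0e_0v_1\dots e_{k-1}v_k$ once around a cycle induces $z_W\in\mathcal{Z}(X)$ with $z_W(e_i)=1$ if $\vec e_i$ points from $v_i$ to $v_{i+1}$, $z_W(e_i)=-1$ otherwise, and $0$ on other edges. $\mathcal{Z}_r(X)$ is the submodule generated by the $z_W$ for cycles of length at most $r$. *)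

theory Defs
  imports Main "HOL-Library.Z2" "Graph_Theory.Digraph"
begin

text \<open>
A graph (loops and parallel edges allowed) is a well-formed pre_digraph G; its
arcs are the edges, and tail/head give the FIXED orientation of each edge used
for the cycle spaces.  Walks are lists of darts (edge, direction): the dart
(e,True) traverses e from tail to head, (e,False) from head to tail.
\<close>

type_synonym 'e dart = "'e \<times> bool"

definition darts :: "('v,'e) pre_digraph \<Rightarrow> 'e dart set" where
  "darts G = arcs G \<times> UNIV"

definition dstart :: "('v,'e) pre_digraph \<Rightarrow> 'e dart \<Rightarrow> 'v" where
  "dstart G d = (if snd d then tail G (fst d) else head G (fst d))"

definition dend :: "('v,'e) pre_digraph \<Rightarrow> 'e dart \<Rightarrow> 'v" where
  "dend G d = (if snd d then head G (fst d) else tail G (fst d))"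

definition drev :: "'e dart \<Rightarrow> 'e dart" where
  "drev d = (fst d, \<not> snd d)"

fun is_walk :: "('v,'e) pre_digraph \<Rightarrow> 'v \<Rightarrow> 'e dart list \<Rightarrow> 'v \<Rightarrow> bool" where
  "is_walk G u [] v \<longleftrightarrow> u = v \<and> u \<in> verts G"
| "is_walk G u (d # ds) v \<longleftrightarrow> u \<in> verts G \<and> d \<in> darts G \<and> dstart G d = u \<and> is_walk G (dend G d) ds v"

definition rev_walk :: "'e dart list \<Rightarrow> 'e dart list" where
  "rev_walk W = rev (map drev W)"

definition backtrack_red :: "('e dart list \<times> 'e dart list) set" where
  "backtrack_red = {(as @ [d, drev d] @ bs, as @ bs) | as bs d. True}"

definition homotopic :: "'e dart list \<Rightarrow> 'e dart list \<Rightarrow> bool" where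
  "homotopic W W' \<longleftrightarrow> (W, W') \<in> (backtrack_red \<union> backtrack_red\<inverse>)\<^sup>*"

text \<open>Q is a closed walk at y once around a cycle of length k:
  k \<ge> 1 darts, pairwise distinct edges, pairwise distinct vertices v_0..v_{k-1}.
  (k = 1: a loop; k = 2: a pair of parallel edges.)\<close>
definition once_around_cycle :: "('v,'e) pre_digraph \<Rightarrow> 'v \<Rightarrow> 'e dart list \<Rightarrow> bool" where
  "once_around_cycle G y Q \<longleftrightarrow> Q \<noteq> [] \<and> is_walk G y Q y
     \<and> distinct (map fst Q) \<and> distinct (map (dstart G) Q)"

definition connected_graph :: "('v,'e) pre_digraph \<Rightarrow> bool" where
  "connected_graph G \<longleftrightarrow> verts G \<noteq> {} \<and> (\<forall>u\<in>verts G. \<forall>v\<in>verts G. \<exists>W. is_walk G u W v)"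

definition r_lasso :: "('v,'e) pre_digraph \<Rightarrow> nat \<Rightarrow> 'v \<Rightarrow> 'e dart list \<Rightarrow> bool" where
  "r_lasso G r x0 L \<longleftrightarrow> (\<exists>W0 y Q. is_walk G x0 W0 y \<and> once_around_cycle G y Q
       \<and> length Q \<le> r \<and> L = W0 @ Q @ rev_walk W0)"

text \<open>The closed walks at x0 whose homotopy class lies in pi_1^r(G,x0), the subgroup
  generated by the classes of r-lassos.  (The inverse of an r-lasso is an r-lasso, so
  the subgroup consists of the classes of finite products of r-lassos.)\<close>
definition pi1r_walks :: "('v,'e) pre_digraph \<Rightarrow> nat \<Rightarrow> 'v \<Rightarrow> 'e dart list set" where
  "pi1r_walks G r x0 = {W. is_walk G x0 W x0 \<and>
      (\<exists>Ls. (\<forall>L\<in>set Ls. r_lasso G r x0 L) \<and> homotopic W (concat Ls))}"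

definition graph_covering ::
  "('w,'f) pre_digraph \<Rightarrow> ('v,'e) pre_digraph \<Rightarrow> ('w \<Rightarrow> 'v) \<Rightarrow> ('f dart \<Rightarrow> 'e dart) \<Rightarrow> bool" where
  "graph_covering H G pV pD \<longleftrightarrow>
     pV ` verts H = verts G
   \<and> (\<forall>d\<in>darts H. pD d \<in> darts G \<and> dstart G (pD d) = pV (dstart H d) \<and> pD (drev d) = drev (pD d))
   \<and> (\<forall>y\<in>verts H. bij_betw pD {d\<in>darts H. dstart H d = y} {d\<in>darts G. dstart G d = pV y})"

text \<open>The r-local covering: a connected covering (H, y0) \<rightarrow> (G, x0) whose characteristic
  subgroup p_*(pi_1(H,y0)) equals pi_1^r(G,x0), i.e. the classes of projections of closed
  walks at y0 are exactly the classes in pi_1^r(G,x0).\<close>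
definition r_local_covering ::
  "nat \<Rightarrow> ('v,'e) pre_digraph \<Rightarrow> 'v \<Rightarrow> ('w,'f) pre_digraph \<Rightarrow> 'w
     \<Rightarrow> ('w \<Rightarrow> 'v) \<Rightarrow> ('f dart \<Rightarrow> 'e dart) \<Rightarrow> bool" where
  "r_local_covering r G x0 H y0 pV pD \<longleftrightarrow>
     wf_digraph H \<and> connected_graph H \<and> graph_covering H G pV pD
   \<and> y0 \<in> verts H \<and> pV y0 = x0
   \<and> (\<forall>W. is_walk G x0 W x0 \<longrightarrow>
        (W \<in> pi1r_walks G r x0 \<longleftrightarrow> (\<exists>W'. is_walk H y0 W' y0 \<and> homotopic (map pD W') W)))"

text \<open>Cycle space over a ring R (integral: int, binary: bit): finitely supported
  functions on the edges satisfying Kirchhoff's law at every vertex.\<close>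
definition cycle_space :: "('v,'e) pre_digraph \<Rightarrow> ('e \<Rightarrow> 'r::comm_ring_1) set" where
  "cycle_space X = {z. finite {e. z e \<noteq> 0} \<and> {e. z e \<noteq> 0} \<subseteq> arcs X \<and>
      (\<forall>v\<in>verts X. (\<Sum>e\<in>{e\<in>arcs X. head X e = v \<and> z e \<noteq> 0}. z e)
                  = (\<Sum>e\<in>{e\<in>arcs X. tail X e = v \<and> z e \<noteq> 0}. z e))}"

definition cycle_vector :: "('v,'e) pre_digraph \<Rightarrow> 'e dart list \<Rightarrow> 'e \<Rightarrow> 'r::comm_ring_1" where
  "cycle_vector X W e = (case find (\<lambda>d. fst d = e) W of
       None \<Rightarrow> 0
     | Some d \<Rightarrow> (if tail X e = dstart X d \<and> head X e = dend X d then 1 else - 1))"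

inductive_set gen_submodule :: "('e \<Rightarrow> 'r::comm_ring_1) set \<Rightarrow> ('e \<Rightarrow> 'r) set"
  for S where
  zero: "(\<lambda>_. 0) \<in> gen_submodule S"
| step: "z \<in> gen_submodule S \<Longrightarrow> w \<in> S \<Longrightarrow> (\<lambda>e. z e + c * w e) \<in> gen_submodule S"

definition cycle_space_r :: "nat \<Rightarrow> ('v,'e) pre_digraph \<Rightarrow> ('e \<Rightarrow> 'r::comm_ring_1) set" where
  "cycle_space_r r X = gen_submodule
     {cycle_vector X W | W y. once_around_cycle X y W \<and> length W \<le> r}"

end

theory Submission
  imports Defs "HOL-Library.Function_Algebras"
begin

text \<open>
  The walk vector of a dart list counts, with signs, how often it traverses each edge
  along and against its orientation; for a walk once around a cycle it is z_W up to sign.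
  Every element of the cycle space is a combination of walk vectors of cycles: a nonzero
  element has a cycle inside its support, and subtracting a multiple of that cycle
  shrinks the support. So it suffices that the walk vector of every closed walk C of G_r
  lies in Z_r(G_r).

  Connect C to the base point and project it to G. The result represents a class in
  pi_1^r(G, x0), so it is homotopic to a product of r-lassos. Lifting dart lists of G to
  G_r step by step and adding up the dart vectors of the lifted steps is invariant under
  homotopy. On the projection of a walk of G_r it returns the walk vector of that walk,
  here the one of C. On an r-lasso starting over x0 it returns the walk vector of the
  lift of its cycle, which closes up because G_r is the r-local covering, and is then a
  cycle of length at most r.
\<close>

section \<open>Walks\<close>

lemma dstart_drev [simp]: "dstart G (drev d) = dend G d"
  and dend_drev [simp]: "dend G (drev d) = dstart G d"
  and drev_drev [simp]: "drev (drev d) = d"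
  and fst_drev [simp]: "fst (drev d) = fst d"
  and drev_in_darts [simp]: "drev d \<in> darts G \<longleftrightarrow> d \<in> darts G"
  by (auto simp: dstart_def dend_def drev_def darts_def mem_Times_iff)

lemma (in wf_digraph) dstart_in_verts: "d \<in> darts G \<Longrightarrow> dstart G d \<in> verts G"
  and dend_in_verts: "d \<in> darts G \<Longrightarrow> dend G d \<in> verts G"
  by (auto simp: darts_def dstart_def dend_def)

lemma rev_walk_Nil [simp]: "rev_walk [] = []"
  and rev_walk_Cons [simp]: "rev_walk (d # ds) = rev_walk ds @ [drev d]"
  and rev_walk_append [simp]: "rev_walk (xs @ ys) = rev_walk ys @ rev_walk xs"
  by (simp_all add: rev_walk_def)

lemma is_walk_start: "is_walk G u W w \<Longrightarrow> u \<in> verts G"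
  by (cases W) auto

lemma is_walk_end: "is_walk G u W w \<Longrightarrow> w \<in> verts G"
  by (induction W arbitrary: u) auto

lemma is_walk_append: "is_walk G u (as @ bs) w \<longleftrightarrow> (\<exists>m. is_walk G u as m \<and> is_walk G m bs w)"
  by (induction as arbitrary: u) (auto dest: is_walk_start)

lemma is_walk_rev_walk: "is_walk G u W w \<Longrightarrow> is_walk G w (rev_walk W) u"
  by (induction W arbitrary: u) (auto simp: is_walk_append dest: is_walk_start)

lemma is_walk_darts: "is_walk G u W w \<Longrightarrow> set W \<subseteq> darts G"
  by (induction W arbitrary: u) auto

lemma is_walk_dend_last: "is_walk G u P w \<Longrightarrow> P \<noteq> [] \<Longrightarrow> dend G (last P) = w"
proof (induction P arbitrary: u)
  case (Cons d ds)
  then show ?case by (cases ds) auto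
qed simp

lemma dend_nth:
  "is_walk G u P w \<Longrightarrow> k < length P \<Longrightarrow> dend G (P ! k) = (map (dstart G) P @ [w]) ! Suc k"
proof (induction P arbitrary: u k)
  case (Cons d ds)
  then show ?case by (cases k; cases ds) auto
qed simp

section \<open>Generated submodules and the cycle space\<close>

lemma gen_submodule_add:
  assumes "a \<in> gen_submodule S" and "b \<in> gen_submodule S"
  shows "a + b \<in> gen_submodule S"
  using assms(2)
proof (induction b rule: gen_submodule.induct)
  case zero
  then show ?case using assms(1) by (simp add: plus_fun_def)
next
  case (step z w c)
  then have "(\<lambda>e. (a + z) e + c * w e) \<in> gen_submodule S"
    using gen_submodule.step by blast
  then show ?case by (simp add: plus_fun_def add.assoc)
qed

lemma gen_submodule_smult:
  assumes "a \<in> gen_submodule S"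
  shows "(\<lambda>e. c * a e) \<in> gen_submodule S"
  using assms
proof (induction a rule: gen_submodule.induct)
  case zero
  then show ?case using gen_submodule.zero by simp
next
  case (step z w c')
  then have "(\<lambda>e. c * z e + (c * c') * w e) \<in> gen_submodule S"
    using gen_submodule.step by blast
  then show ?case by (simp add: distrib_left mult.assoc)
qed

lemma gen_submodule_uminus: "a \<in> gen_submodule S \<Longrightarrow> - a \<in> gen_submodule S"
  using gen_submodule_smult[of a S "- 1"] by (simp add: fun_Compl_def)

lemma gen_submodule_base: "w \<in> S \<Longrightarrow> w \<in> gen_submodule S"
  using gen_submodule.step[OF gen_submodule.zero, of w S 1] by simp

lemma gen_submodule_least:
  assumes "z \<in> gen_submodule S" and "S \<subseteq> M" and "(\<lambda>_. 0) \<in> M"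
    and "\<And>z w c. z \<in> M \<Longrightarrow> w \<in> M \<Longrightarrow> (\<lambda>e. z e + c * w e) \<in> M"
  shows "z \<in> M"
  using assms(1)
proof induction
  case (step z w c)
  then show ?case using assms(2,4) by blast
qed (use assms(3) in simp)

lemma gen_submodule_subset:
  assumes "S \<subseteq> gen_submodule T"
  shows "gen_submodule S \<subseteq> gen_submodule T"
proof
  have closed: "(\<lambda>e. a e + c * b e) \<in> gen_submodule T"
    if "a \<in> gen_submodule T" "b \<in> gen_submodule T" for a b c
    using gen_submodule_add[OF that(1) gen_submodule_smult[OF that(2)]] by (simp add: plus_fun_def)
  fix z assume "z \<in> gen_submodule S"
  then show "z \<in> gen_submodule T"
    using gen_submodule_least assms gen_submodule.zero closed by blast
qed

lemma sum_over_support: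
  assumes "finite E" "E \<subseteq> arcs X" "{e. z e \<noteq> 0} \<subseteq> E"
  shows "(\<Sum>e\<in>{e\<in>E. P e}. z e) = (\<Sum>e\<in>{e\<in>arcs X. P e \<and> z e \<noteq> 0}. z e)"
  by (rule sum.mono_neutral_right) (use assms in auto)

lemma cycle_spaceI:
  assumes "finite E" "E \<subseteq> arcs X" "{e. z e \<noteq> 0} \<subseteq> E"
    and "\<And>v. v \<in> verts X \<Longrightarrow> (\<Sum>e\<in>{e\<in>E. head X e = v}. z e) = (\<Sum>e\<in>{e\<in>E. tail X e = v}. z e)"
  shows "z \<in> cycle_space X"
  using assms sum_over_support[OF assms(1-3)] unfolding cycle_space_def
  by (auto intro: finite_subset)

lemma cycle_space_kirchhoff:
  assumes "z \<in> cycle_space X" "finite E" "E \<subseteq> arcs X" "{e. z e \<noteq> 0} \<subseteq> E" "v \<in> verts X"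
  shows "(\<Sum>e\<in>{e\<in>E. head X e = v}. z e) = (\<Sum>e\<in>{e\<in>E. tail X e = v}. z e)"
  using assms(1,5) sum_over_support[OF assms(2-4)] unfolding cycle_space_def by auto

lemma cycle_space_zero: "(\<lambda>_. 0) \<in> cycle_space X"
  unfolding cycle_space_def by simp

lemma cycle_space_add_smult:
  assumes "z \<in> cycle_space X" "w \<in> cycle_space X"
  shows "(\<lambda>e. z e + c * w e) \<in> cycle_space X"
proof -
  define E where "E = {e. z e \<noteq> 0} \<union> {e. w e \<noteq> 0}"
  have E: "finite E" "E \<subseteq> arcs X"
    using assms unfolding cycle_space_def E_def by auto
  show ?thesis
  proof (rule cycle_spaceI[OF E])
    show "{e. z e + c * w e \<noteq> 0} \<subseteq> E"
      by (auto simp: E_def)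
    show "(\<Sum>e\<in>{e\<in>E. head X e = v}. z e + c * w e) = (\<Sum>e\<in>{e\<in>E. tail X e = v}. z e + c * w e)"
      if "v \<in> verts X" for v
      using cycle_space_kirchhoff[OF assms(1) E _ that] cycle_space_kirchhoff[OF assms(2) E _ that]
      by (simp add: sum.distrib sum_distrib_left[symmetric] E_def)
  qed
qed

lemma cycle_space_uminus: "z \<in> cycle_space X \<Longrightarrow> - z \<in> cycle_space X"
  using cycle_space_add_smult[OF cycle_space_zero, of z X "- 1"] by (simp add: fun_Compl_def)

section \<open>Walk vectors and cycle vectors\<close>

definition dart_vector :: "'e dart \<Rightarrow> 'e \<Rightarrow> 'r::comm_ring_1" where
  "dart_vector d e = (if e = fst d then if snd d then 1 else - 1 else 0)"

primrec walk_vector :: "'e dart list \<Rightarrow> 'e \<Rightarrow> 'r::comm_ring_1" where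
  "walk_vector [] = 0"
| "walk_vector (d # ds) = dart_vector d + walk_vector ds"

lemma dart_vector_drev: "dart_vector (drev d) = - dart_vector d"
  by (auto simp: dart_vector_def drev_def fun_eq_iff)

lemma walk_vector_append [simp]: "walk_vector (xs @ ys) = walk_vector xs + walk_vector ys"
  by (induction xs) (auto simp: add.assoc)

lemma walk_vector_rev_walk [simp]: "walk_vector (rev_walk xs) = - walk_vector xs"
  by (induction xs) (auto simp: dart_vector_drev)

lemma walk_vector_eq_0: "e \<notin> fst ` set W \<Longrightarrow> walk_vector W e = 0"
  by (induction W) (auto simp: dart_vector_def)

lemma walk_vector_support: "{e. walk_vector W e \<noteq> 0} \<subseteq> fst ` set W"
  using walk_vector_eq_0[of _ W] by auto

lemma walk_vector_distinct_edges:
  "distinct (map fst W) \<Longrightarrow> d \<in> set W \<Longrightarrow> walk_vector W (fst d) = (if snd d then 1 else - 1)"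
  by (induction W) (auto simp: dart_vector_def walk_vector_eq_0)

lemma sum_dart_vector:
  assumes "finite E" "fst d \<in> E"
  shows "(\<Sum>e\<in>{e\<in>E. P e}. dart_vector d e) = (if P (fst d) then if snd d then 1 else - 1 else 0)"
  using assms by (simp add: dart_vector_def sum.delta_remove if_distrib cong: if_cong)

lemma dart_vector_net_flow:
  assumes "finite E" "fst d \<in> E"
  shows "(\<Sum>e\<in>{e\<in>E. head X e = v}. dart_vector d e) - (\<Sum>e\<in>{e\<in>E. tail X e = v}. dart_vector d e)
      = (if dend X d = v then 1 else 0) - (if dstart X d = v then (1::'r::comm_ring_1) else 0)"
  by (cases "snd d") (simp_all add: sum_dart_vector[OF assms] dstart_def dend_def)

lemma walk_vector_net_flow:
  fixes X :: "('v, 'e) pre_digraph"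
  assumes "finite E"
  shows "is_walk X u W w \<Longrightarrow> fst ` set W \<subseteq> E \<Longrightarrow>
    (\<Sum>e\<in>{e\<in>E. head X e = v}. walk_vector W e) - (\<Sum>e\<in>{e\<in>E. tail X e = v}. walk_vector W e)
      = (if w = v then 1 else 0) - (if u = v then (1::'r::comm_ring_1) else 0)"
proof (induction W arbitrary: u)
  case (Cons d ds)
  let ?flow = "\<lambda>f :: 'e \<Rightarrow> 'r. (\<Sum>e\<in>{e\<in>E. head X e = v}. f e) - (\<Sum>e\<in>{e\<in>E. tail X e = v}. f e)"
  have d: "fst d \<in> E" "dstart X d = u" and ds: "is_walk X (dend X d) ds w" "fst ` set ds \<subseteq> E"
    using Cons.prems by auto
  have "?flow (walk_vector (d # ds)) = ?flow (dart_vector d) + ?flow (walk_vector ds)"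
    by (simp only: walk_vector.simps plus_fun_apply sum.distrib add_diff_add)
  also have "?flow (dart_vector d) = (if dend X d = v then 1 else 0) - (if u = v then 1 else 0)"
    using dart_vector_net_flow[OF assms d(1), of X v] by (simp only: d(2))
  also have "?flow (walk_vector ds) = (if w = v then 1 else 0) - (if dend X d = v then 1 else 0)"
    by (rule Cons.IH[OF ds])
  also have "((if dend X d = v then 1 else 0) - (if u = v then 1 else 0))
      + ((if w = v then 1 else 0) - (if dend X d = v then 1 else 0))
      = (if w = v then 1 else 0) - (if u = v then (1::'r) else 0)"
    by (simp add: algebra_simps split del: if_split)
  finally show ?case .
qed simp

lemma walk_vector_in_cycle_space:
  assumes "is_walk X u W u"
  shows "walk_vector W \<in> cycle_space X"
proof (rule cycle_spaceI)
  show "finite (fst ` set W)"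
    by simp
  show "{e. walk_vector W e \<noteq> 0} \<subseteq> fst ` set W"
    by (rule walk_vector_support)
  show "fst ` set W \<subseteq> arcs X"
    using is_walk_darts[OF assms] by (auto simp: darts_def)
  show "(\<Sum>e\<in>{e\<in>fst ` set W. head X e = v}. walk_vector W e)
      = (\<Sum>e\<in>{e\<in>fst ` set W. tail X e = v}. walk_vector W e)" for v
    using walk_vector_net_flow[OF finite_imageI[OF finite_set] assms order_refl, of v]
    by (simp only: diff_self right_minus_eq)
qed

lemma closed_walk_dend_nth:
  assumes "is_walk X y C y" "k < length C"
  shows "dend X (C ! k) = dstart X (C ! (Suc k mod length C))"
proof (cases "Suc k < length C")
  case True
  then show ?thesis using dend_nth[OF assms] by (simp add: nth_append)
next
  case False
  then have "Suc k = length C" using assms(2) by simp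
  moreover have "dstart X (C ! 0) = y" using assms by (cases C) auto
  ultimately show ?thesis using dend_nth[OF assms] by (simp add: nth_append)
qed

lemma cycle_dart_not_loop:
  assumes "once_around_cycle X y C" "2 \<le> length C" "d \<in> set C"
  shows "dstart X d \<noteq> dend X d"
proof
  assume loop: "dstart X d = dend X d"
  obtain k where k: "k < length C" "d = C ! k"
    using assms(3) by (auto simp: in_set_conv_nth)
  have "dstart X (C ! k) = dstart X (C ! (Suc k mod length C))"
    using loop closed_walk_dend_nth[of X y C k] assms(1) k by (simp add: once_around_cycle_def)
  moreover have "distinct (map (dstart X) C)"
    using assms(1) by (simp add: once_around_cycle_def)
  moreover have "Suc k mod length C < length C"
    using k(1) by (auto intro: mod_less_divisor)
  ultimately have "k = Suc k mod length C"
    using k(1) nth_eq_iff_index_eq[of "map (dstart X) C" k "Suc k mod length C"] by simp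
  then show False
    using k(1) assms(2) by (cases "Suc k = length C") auto
qed

lemma cycle_vector_eq_0:
  assumes "e \<notin> fst ` set C"
  shows "cycle_vector X C e = 0"
proof -
  have "find (\<lambda>d. fst d = e) C = None"
    using assms by (induction C) auto
  then show ?thesis by (simp add: cycle_vector_def)
qed

lemma cycle_vector_distinct_edges:
  assumes "distinct (map fst C)" "d \<in> set C"
  shows "cycle_vector X C (fst d)
    = (if tail X (fst d) = dstart X d \<and> head X (fst d) = dend X d then 1 else - 1)"
proof -
  have "find (\<lambda>d'. fst d' = fst d) C = Some d"
    using assms by (induction C) auto
  then show ?thesis by (simp add: cycle_vector_def)
qed

text \<open>The sign differs only for a loop traversed against its orientation.\<close>
lemma cycle_vector_eq_walk_vector:
  assumes "once_around_cycle X y C"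
  shows "(cycle_vector X C :: 'e \<Rightarrow> 'r::comm_ring_1) = walk_vector C \<or> cycle_vector X C = - walk_vector C"
proof (cases "length C = 1")
  case True
  then obtain d where C: "C = [d]" by (cases C) (auto simp: length_Suc_conv)
  then have "tail X (fst d) = head X (fst d)"
    using assms by (cases "snd d") (auto simp: once_around_cycle_def dstart_def dend_def)
  then show ?thesis
    using C by (cases "snd d") (auto simp: fun_eq_iff cycle_vector_def dart_vector_def dstart_def dend_def)
next
  case False
  moreover have "C \<noteq> []"
    using assms by (simp add: once_around_cycle_def)
  ultimately have long: "2 \<le> length C"
    by (cases "length C") auto
  have distinct: "distinct (map fst C)"
    using assms by (simp add: once_around_cycle_def)
  have "(cycle_vector X C e :: 'r) = walk_vector C e" for e
  proof (cases "e \<in> fst ` set C")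
    case True
    then obtain d where d: "d \<in> set C" "e = fst d" by auto
    have "cycle_vector X C (fst d)
        = (if tail X (fst d) = dstart X d \<and> head X (fst d) = dend X d then 1 else - 1 :: 'r)"
      by (rule cycle_vector_distinct_edges[OF distinct d(1)])
    moreover have "walk_vector C (fst d) = (if snd d then 1 else - 1 :: 'r)"
      by (rule walk_vector_distinct_edges[OF distinct d(1)])
    ultimately show ?thesis
      using cycle_dart_not_loop[OF assms long d(1)] d(2)
      by (cases "snd d") (auto simp: dstart_def dend_def)
  qed (simp add: cycle_vector_eq_0 walk_vector_eq_0)
  then show ?thesis by auto
qed

lemma cycle_vector_in_cycle_space:
  assumes "once_around_cycle X y C"
  shows "(cycle_vector X C :: 'e \<Rightarrow> 'r::comm_ring_1) \<in> cycle_space X"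
proof -
  have "(walk_vector C :: 'e \<Rightarrow> 'r) \<in> cycle_space X"
    using assms walk_vector_in_cycle_space by (auto simp: once_around_cycle_def)
  moreover have "- (walk_vector C :: 'e \<Rightarrow> 'r) \<in> cycle_space X"
    using calculation by (rule cycle_space_uminus)
  moreover have "(cycle_vector X C :: 'e \<Rightarrow> 'r) = walk_vector C \<or> cycle_vector X C = - walk_vector C"
    by (rule cycle_vector_eq_walk_vector[OF assms])
  ultimately show ?thesis
    by metis
qed

lemma cycle_vector_in_gen_submodule_iff:
  assumes "once_around_cycle X y C"
  shows "cycle_vector X C \<in> gen_submodule S \<longleftrightarrow> walk_vector C \<in> gen_submodule (S :: ('e \<Rightarrow> 'r::comm_ring_1) set)"
proof -
  have "a \<in> gen_submodule S \<longleftrightarrow> - a \<in> gen_submodule S" for a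
    using gen_submodule_uminus[of a S] gen_submodule_uminus[of "- a" S] by auto
  moreover have "(cycle_vector X C :: 'e \<Rightarrow> 'r) = walk_vector C \<or> cycle_vector X C = - walk_vector C"
    by (rule cycle_vector_eq_walk_vector[OF assms])
  ultimately show ?thesis
    by metis
qed

lemma cycle_space_r_subset_cycle_space:
  fixes X :: "('v, 'e) pre_digraph"
  shows "(cycle_space_r r X :: ('e \<Rightarrow> 'r::comm_ring_1) set) \<subseteq> cycle_space X"
proof
  fix z :: "'e \<Rightarrow> 'r" assume "z \<in> cycle_space_r r X"
  then show "z \<in> cycle_space X"
    unfolding cycle_space_r_def
  proof (rule gen_submodule_least)
    show "{cycle_vector X W |W y. once_around_cycle X y W \<and> length W \<le> r} \<subseteq> cycle_space X"
      by (blast intro: cycle_vector_in_cycle_space)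
  qed (simp_all add: cycle_space_zero cycle_space_add_smult)
qed

section \<open>Decomposition into cycles\<close>

lemma cycle_space_support_continues:
  assumes "wf_digraph X" "z \<in> cycle_space X" "z e \<noteq> 0" "tail X e \<noteq> head X e"
    and "v = tail X e \<or> v = head X e"
  shows "\<exists>e'. z e' \<noteq> 0 \<and> e' \<noteq> e \<and> (tail X e' = v \<or> head X e' = v)"
proof (rule ccontr)
  assume "\<not> ?thesis"
  moreover have e: "e \<in> arcs X"
    using assms(2,3) by (auto simp: cycle_space_def)
  ultimately have "{x\<in>arcs X. head X x = v \<and> z x \<noteq> 0} = (if head X e = v then {e} else {})"
    and "{x\<in>arcs X. tail X x = v \<and> z x \<noteq> 0} = (if tail X e = v then {e} else {})"
    using assms(3) by auto
  moreover have "v \<in> verts X"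
    using assms(1,5) e by (auto simp: wf_digraph_def)
  ultimately have "(if head X e = v then z e else 0) = (if tail X e = v then z e else 0)"
    using assms(2) unfolding cycle_space_def by (auto split: if_splits)
  then show False
    using assms(3-5) by auto
qed

definition is_path :: "('v, 'e) pre_digraph \<Rightarrow> 'v \<Rightarrow> 'e dart list \<Rightarrow> 'v \<Rightarrow> bool" where
  "is_path X u P w \<longleftrightarrow> is_walk X u P w \<and> distinct (map (dstart X) P @ [w])"

lemma dart_ends_eq:
  "fst d = fst d' \<Longrightarrow> dstart X d = dstart X d' \<or> dstart X d = dend X d'"
  by (auto simp: dstart_def dend_def)

lemma path_vertex_on_dart:
  assumes "is_path X u P w" "k < length P" "j \<le> length P"
    and "(map (dstart X) P @ [w]) ! j = dstart X (P ! k) \<or> (map (dstart X) P @ [w]) ! j = dend X (P ! k)"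
  shows "j = k \<or> j = Suc k"
  using assms dend_nth[of X u P w k]
    nth_eq_iff_index_eq[of "map (dstart X) P @ [w]" j k] nth_eq_iff_index_eq[of "map (dstart X) P @ [w]" j "Suc k"]
  by (auto simp: is_path_def nth_append split: if_splits)

lemma path_distinct_edges:
  assumes "is_path X u P w"
  shows "distinct (map fst P)"
proof (rule ccontr)
  assume "\<not> distinct (map fst P)"
  then obtain i j where ij: "i < length P" "j < length P" "i \<noteq> j" "fst (P ! i) = fst (P ! j)"
    by (auto simp: distinct_conv_nth)
  have "i = j \<or> i = Suc j"
    using path_vertex_on_dart[OF assms ij(2), of i] dart_ends_eq[OF ij(4), of X] ij(1)
    by (simp add: nth_append)
  moreover have "j = i \<or> j = Suc i"
    using path_vertex_on_dart[OF assms ij(1), of j] dart_ends_eq[OF ij(4)[symmetric], of X] ij(2)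
    by (simp add: nth_append)
  ultimately show False
    using ij(3) by auto
qed

lemma path_end_on_dart:
  assumes "is_path X u P w" "k < length P" "w = dstart X (P ! k) \<or> w = dend X (P ! k)"
  shows "Suc k = length P"
  using path_vertex_on_dart[OF assms(1,2), of "length P"] assms(2,3) by (auto simp: nth_append)

lemma path_snoc:
  assumes "wf_digraph X" "is_path X u P w" "d \<in> darts X" "dstart X d = w" "dend X d \<notin> set (map (dstart X) P @ [w])"
  shows "is_path X u (P @ [d]) (dend X d)"
  using assms wf_digraph.dstart_in_verts[OF assms(1,3)] wf_digraph.dend_in_verts[OF assms(1,3)]
  by (auto simp: is_path_def is_walk_append)

lemma path_closes_to_cycle:
  assumes "is_path X u P w" "d \<in> darts X" "dstart X d = w" "fst d \<notin> fst ` set P"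
    and "i < length P" "dstart X (P ! i) = dend X d"
  shows "once_around_cycle X (dend X d) (drop i P @ [d])"
proof -
  have walk: "is_walk X u (take i P @ drop i P) w"
    using assms(1) by (simp add: is_path_def)
  have "drop i P = P ! i # drop (Suc i) P"
    using assms(5) by (rule Cons_nth_drop_Suc[symmetric])
  then have "is_walk X (dend X d) (drop i P) w"
    using walk assms(6) by (auto simp: is_walk_append)
  then have "is_walk X (dend X d) (drop i P @ [d]) (dend X d)"
    using assms(2,3) is_walk_start is_walk_end by (fastforce simp: is_walk_append)
  moreover have "distinct (drop i (map (dstart X) P @ [w]))"
    using assms(1) unfolding is_path_def by (intro distinct_drop) simp
  moreover have "drop i (map (dstart X) P @ [w]) = map (dstart X) (drop i P @ [d])"
    using assms(3,5) by (simp add: drop_map)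
  moreover have "distinct (map fst (drop i P @ [d]))"
    using path_distinct_edges[OF assms(1)] assms(4)
    by (auto simp: drop_map[symmetric] dest: in_set_dropD)
  ultimately show ?thesis
    by (simp only: once_around_cycle_def) simp
qed

text \<open>A longest path in the support ends at a vertex where, by Kirchhoff's law, a further
  support edge continues it; as the path cannot be extended, that edge closes a cycle.\<close>
lemma cycle_in_support:
  assumes wf: "wf_digraph X" and z: "z \<in> cycle_space X" and "z e0 \<noteq> 0"
  shows "\<exists>C y. once_around_cycle X y C \<and> fst ` set C \<subseteq> {e. z e \<noteq> 0}"
proof -
  define S where "S = {e. z e \<noteq> 0}"
  have S: "finite S" "S \<subseteq> arcs X" "e0 \<in> S"
    using z assms(3) by (auto simp: cycle_space_def S_def)
  show ?thesis
  proof (cases "\<exists>e\<in>S. tail X e = head X e")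
    case True
    then obtain e where e: "e \<in> S" "tail X e = head X e" by blast
    then have "once_around_cycle X (tail X e) [(e, True)]"
      using S(2) wf by (auto simp: once_around_cycle_def darts_def dstart_def dend_def wf_digraph_def)
    then show ?thesis
      using e(1) by (auto simp: S_def)
  next
    case False
    define support_path where
      "support_path P \<longleftrightarrow> P \<noteq> [] \<and> fst ` set P \<subseteq> S \<and> (\<exists>u w. is_path X u P w)" for P
    let ?T = "tail X ` S \<union> head X ` S"
    have "tail X e0 \<in> verts X" "head X e0 \<in> verts X" "tail X e0 \<noteq> head X e0"
      using S(2,3) False wf by (auto simp: wf_digraph_def)
    then have "is_path X (tail X e0) [(e0, True)] (head X e0)"
      using S(2,3) by (auto simp: is_path_def darts_def dstart_def dend_def)
    then have "support_path [(e0, True)]"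
      using S(3) unfolding support_path_def by auto
    moreover have "length P < card ?T" if P_path: "support_path P" for P
    proof -
      obtain u w where P: "P \<noteq> []" "fst ` set P \<subseteq> S" "is_path X u P w"
        using P_path by (auto simp: support_path_def)
      have ends: "dstart X d \<in> ?T \<and> dend X d \<in> ?T" if "d \<in> set P" for d
      proof -
        have "fst d \<in> S"
          using that P(2) by blast
        then show ?thesis
          by (simp add: dstart_def dend_def)
      qed
      have "dend X (last P) = w"
        using is_walk_dend_last[of X u P w] P(1,3) by (simp add: is_path_def)
      then have "w \<in> ?T"
        using ends[OF last_in_set[OF P(1)]] by blast
      moreover have "dstart X ` set P \<subseteq> ?T"
        using ends by blast
      ultimately have "set (map (dstart X) P @ [w]) \<subseteq> ?T"
        by simp
      then have "card (set (map (dstart X) P @ [w])) \<le> card ?T"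
        using S(1) by (intro card_mono) auto
      moreover have "distinct (map (dstart X) P @ [w])"
        using P(3) by (simp add: is_path_def)
      then have "card (set (map (dstart X) P @ [w])) = length P + 1"
        by (subst distinct_card) simp_all
      ultimately show ?thesis by simp
    qed
    ultimately obtain P where "support_path P"
      and maximal: "\<And>P'. support_path P' \<Longrightarrow> length P' \<le> length P"
      using ex_has_greatest_nat[of support_path "[(e0, True)]" length "card ?T"] by blast
    from \<open>support_path P\<close> obtain u w where P: "P \<noteq> []" "fst ` set P \<subseteq> S" and path: "is_path X u P w"
      unfolding support_path_def by blast
    have last: "last P \<in> set P" "dend X (last P) = w"
      using is_walk_dend_last[of X u P w] P(1) path by (simp_all add: is_path_def)
    have "fst (last P) \<in> S" "w = tail X (fst (last P)) \<or> w = head X (fst (last P))"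
      using last P(2) by (auto simp: dend_def)
    then obtain e' where e': "z e' \<noteq> 0" "e' \<noteq> fst (last P)" "tail X e' = w \<or> head X e' = w"
      using cycle_space_support_continues[OF wf z, of "fst (last P)" w] False by (auto simp: S_def)
    define d where "d = (e', tail X e' = w)"
    have d: "d \<in> darts X" "dstart X d = w" "dend X d \<noteq> w" "fst d \<in> S"
      using e' False S(2) by (auto simp: d_def darts_def dstart_def dend_def S_def)
    have new_edge: "fst d \<notin> fst ` set P"
    proof
      assume "fst d \<in> fst ` set P"
      then obtain k where k: "k < length P" "fst (P ! k) = e'"
        by (auto simp: in_set_conv_nth d_def)
      then have "w = dstart X (P ! k) \<or> w = dend X (P ! k)"
        using e'(3) by (cases "snd (P ! k)") (auto simp: dstart_def dend_def)
      then have "Suc k = length P"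
        by (rule path_end_on_dart[OF path k(1)])
      then have "P ! k = last P"
        using last_conv_nth[OF P(1)] by (metis diff_Suc_1)
      then show False
        using k(2) e'(2) by simp
    qed
    show ?thesis
    proof (cases "dend X d \<in> set (map (dstart X) P)")
      case True
      then obtain i where i: "i < length P" "dstart X (P ! i) = dend X d"
        by (auto simp: in_set_conv_nth)
      have "once_around_cycle X (dend X d) (drop i P @ [d])"
        by (rule path_closes_to_cycle[OF path d(1,2) new_edge i])
      moreover have "fst ` set (drop i P @ [d]) \<subseteq> S"
        using P(2) d(4) by (auto dest: in_set_dropD)
      ultimately show ?thesis
        unfolding S_def by blast
    next
      case False
      then have "support_path (P @ [d])"
        using path_snoc[OF wf path d(1,2)] d(3,4) P(2) by (auto simp: support_path_def)
      then show ?thesis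
        using maximal by fastforce
    qed
  qed
qed

text \<open>Subtracting a multiple of a cycle in the support kills one edge, since the
  walk vector of a cycle is \<open>\<plusminus>1\<close> on each of its edges.\<close>
lemma cycle_space_subset_gen_cycles:
  fixes X :: "('v, 'e) pre_digraph"
  assumes "wf_digraph X"
  shows "(cycle_space X :: ('e \<Rightarrow> 'r::comm_ring_1) set)
    \<subseteq> gen_submodule {walk_vector C | C y. once_around_cycle X y C}"
    (is "_ \<subseteq> gen_submodule ?cycles")
proof
  fix z :: "'e \<Rightarrow> 'r"
  assume "z \<in> cycle_space X"
  then show "z \<in> gen_submodule ?cycles"
  proof (induction "card {e. z e \<noteq> 0}" arbitrary: z rule: less_induct)
    case less
    show ?case
    proof (cases "\<exists>e. z e \<noteq> 0")
      case False
      then have "z = (\<lambda>_. 0)" by auto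
      then show ?thesis using gen_submodule.zero by simp
    next
      case True
      then obtain C y where C: "once_around_cycle X y C" and support: "fst ` set C \<subseteq> {e. z e \<noteq> 0}"
        using cycle_in_support[OF assms less.prems] by blast
      define d where "d = hd C"
      have d: "d \<in> set C"
        using C by (simp add: once_around_cycle_def d_def)
      define c where "c = z (fst d) * walk_vector C (fst d)"
      define z' where "z' = (\<lambda>x. z x + (- c) * walk_vector C x)"
      have "walk_vector C (fst d) = (if snd d then 1 else - 1 :: 'r)"
        using C by (intro walk_vector_distinct_edges d) (simp add: once_around_cycle_def)
      then have "walk_vector C (fst d) * walk_vector C (fst d) = (1 :: 'r)"
        by simp
      then have "z' (fst d) = 0"
        by (simp add: z'_def c_def algebra_simps)
      moreover have "walk_vector C x = (0 :: 'r)" if "z x = 0" for x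
        using support that by (intro walk_vector_eq_0) auto
      ultimately have "{x. z' x \<noteq> 0} \<subseteq> {x. z x \<noteq> 0} - {fst d}"
        by (auto simp: z'_def)
      moreover have "finite {x. z x \<noteq> 0}" "fst d \<in> {x. z x \<noteq> 0}"
        using less.prems support d by (auto simp: cycle_space_def)
      ultimately have "card {x. z' x \<noteq> 0} < card {x. z x \<noteq> 0}"
        by (meson card_Diff1_less card_mono finite_Diff le_less_trans)
      moreover have "z' \<in> cycle_space X"
        unfolding z'_def using C
        by (intro cycle_space_add_smult less.prems walk_vector_in_cycle_space)
          (auto simp: once_around_cycle_def)
      ultimately have "z' \<in> gen_submodule ?cycles"
        by (rule less.hyps)
      moreover have "walk_vector C \<in> ?cycles"
        using C by blast
      ultimately have "(\<lambda>x. z' x + c * walk_vector C x) \<in> gen_submodule ?cycles"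
        by (rule gen_submodule.step)
      then show ?thesis
        by (simp add: z'_def)
    qed
  qed
qed

section \<open>Lifting along a covering\<close>

locale covering =
  fixes G :: "('v, 'e) pre_digraph" and H :: "('w, 'f) pre_digraph"
    and pV :: "'w \<Rightarrow> 'v" and pD :: "'f dart \<Rightarrow> 'e dart"
  assumes wf_H: "wf_digraph H" and graph_covering: "graph_covering H G pV pD"
begin

lemma pD_in_darts: "d \<in> darts H \<Longrightarrow> pD d \<in> darts G"
  and dstart_pD: "d \<in> darts H \<Longrightarrow> dstart G (pD d) = pV (dstart H d)"
  and pD_drev: "d \<in> darts H \<Longrightarrow> pD (drev d) = drev (pD d)"
  using graph_covering by (simp_all add: graph_covering_def)

lemma dend_pD: "d \<in> darts H \<Longrightarrow> dend G (pD d) = pV (dend H d)"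
  using dstart_pD[of "drev d"] pD_drev[of d] by simp

lemma pV_in_verts: "y \<in> verts H \<Longrightarrow> pV y \<in> verts G"
  using graph_covering by (auto simp: graph_covering_def)

definition liftable :: "'e dart \<Rightarrow> 'w \<Rightarrow> bool" where
  "liftable d y \<longleftrightarrow> y \<in> verts H \<and> d \<in> darts G \<and> dstart G d = pV y"

definition dart_lift :: "'e dart \<Rightarrow> 'w \<Rightarrow> 'f dart" where
  "dart_lift d y = (THE l. l \<in> darts H \<and> dstart H l = y \<and> pD l = d)"

lemma unique_dart_lift:
  assumes "liftable d y"
  shows "\<exists>!l. l \<in> darts H \<and> dstart H l = y \<and> pD l = d"
proof -
  have bij: "bij_betw pD {l \<in> darts H. dstart H l = y} {d \<in> darts G. dstart G d = pV y}"
    using graph_covering assms by (simp add: graph_covering_def liftable_def)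
  then have "d \<in> pD ` {l \<in> darts H. dstart H l = y}"
    using assms by (auto simp: bij_betw_def liftable_def)
  moreover have "inj_on pD {l \<in> darts H. dstart H l = y}"
    using bij by (simp add: bij_betw_def)
  ultimately show ?thesis
    by (auto dest: inj_onD)
qed

lemma dart_lift:
  assumes "liftable d y"
  shows "dart_lift d y \<in> darts H" "dstart H (dart_lift d y) = y" "pD (dart_lift d y) = d"
  using theI'[OF unique_dart_lift[OF assms]] by (simp_all add: dart_lift_def)

lemma liftable_pD: "l \<in> darts H \<Longrightarrow> liftable (pD l) (dstart H l)"
  using wf_digraph.dstart_in_verts[OF wf_H] by (simp add: liftable_def pD_in_darts dstart_pD)

lemma dart_lift_pD: "l \<in> darts H \<Longrightarrow> dart_lift (pD l) (dstart H l) = l"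
  using unique_dart_lift[OF liftable_pD] dart_lift[OF liftable_pD] by blast

text \<open>Lifting is made total on arbitrary dart lists, not only on walks: at a vertex
  where only the reverse of d lifts, the step along d uses the lift of its reverse, and
  where neither lifts it stays put. This makes a step along d followed by a step along
  \<open>drev d\<close> the identity everywhere, so that lifts are invariant under homotopy.\<close>
definition step_lift :: "'e dart \<Rightarrow> 'w \<Rightarrow> 'f dart option" where
  "step_lift d y = (if liftable d y then Some (dart_lift d y)
     else if liftable (drev d) y then Some (dart_lift (drev d) y) else None)"

definition step_target :: "'e dart \<Rightarrow> 'w \<Rightarrow> 'w" where
  "step_target d y = (case step_lift d y of None \<Rightarrow> y | Some l \<Rightarrow> dend H l)"

definition step_vector :: "'e dart \<Rightarrow> 'w \<Rightarrow> 'f \<Rightarrow> 'r::comm_ring_1" where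
  "step_vector d y = (case step_lift d y of None \<Rightarrow> 0 | Some l \<Rightarrow> dart_vector l)"

abbreviation lift_end :: "'e dart list \<Rightarrow> 'w \<Rightarrow> 'w" where
  "lift_end W \<equiv> fold step_target W"

primrec lift_vector :: "'e dart list \<Rightarrow> 'w \<Rightarrow> 'f \<Rightarrow> 'r::comm_ring_1" where
  "lift_vector [] y = 0"
| "lift_vector (d # ds) y = step_vector d y + lift_vector ds (step_target d y)"

lemma lift_vector_append:
  "lift_vector (xs @ ys) y = lift_vector xs y + lift_vector ys (lift_end xs y)"
  by (induction xs arbitrary: y) (auto simp: add.assoc)

lemma step_lift_pD: "l \<in> darts H \<Longrightarrow> step_lift (pD l) (dstart H l) = Some l"
  by (simp add: step_lift_def liftable_pD dart_lift_pD)

lemma step_lift_drev: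
  "step_lift (drev d) (step_target d y) = map_option drev (step_lift d y)"
proof (cases "liftable d y")
  case True
  define l where "l = dart_lift d y"
  have l: "l \<in> darts H" "dstart H l = y" "pD l = d"
    using dart_lift[OF True] by (simp_all add: l_def)
  have "step_lift (drev d) (dend H l) = Some (drev l)"
    using step_lift_pD[of "drev l"] l by (simp add: pD_drev)
  then show ?thesis
    using True by (simp add: step_target_def step_lift_def l_def)
next
  case not_d: False
  show ?thesis
  proof (cases "liftable (drev d) y")
    case True
    define l where "l = dart_lift (drev d) y"
    have l: "l \<in> darts H" "dstart H l = y" "pD l = drev d"
      using dart_lift[OF True] by (simp_all add: l_def)
    have "pV (dend H l) = dstart G d"
      using dend_pD[OF l(1)] l(3) by simp
    then have "liftable d (dend H l)" and "\<not> liftable (drev d) (dend H l)"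
      using True not_d wf_digraph.dend_in_verts[OF wf_H l(1)] by (auto simp: liftable_def)
    moreover have "dart_lift d (dend H l) = drev l"
      using dart_lift_pD[of "drev l"] l by (simp add: pD_drev)
    ultimately show ?thesis
      using True not_d by (simp add: step_target_def step_lift_def l_def)
  next
    case False
    then show ?thesis
      using not_d by (simp add: step_target_def step_lift_def)
  qed
qed

lemma step_lift_Some: "step_lift d y = Some l \<Longrightarrow> dstart H l = y"
  by (auto simp: step_lift_def dart_lift split: if_splits)

lemma step_target_drev: "step_target (drev d) (step_target d y) = y"
  using step_lift_drev[of d y] step_lift_Some[of d y]
  by (cases "step_lift d y") (simp_all add: step_target_def)

lemma step_vector_drev:
  "step_vector d y + step_vector (drev d) (step_target d y) = (0 :: 'f \<Rightarrow> 'r::comm_ring_1)"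
  using step_lift_drev[of d y]
  by (cases "step_lift d y") (simp_all add: step_vector_def dart_vector_drev)

lemma lift_backtrack_red:
  assumes "(W, W') \<in> backtrack_red \<union> backtrack_red\<inverse>"
  shows "lift_end W y = lift_end W' y \<and> (lift_vector W y :: 'f \<Rightarrow> 'r::comm_ring_1) = lift_vector W' y"
  using assms step_target_drev step_vector_drev[of _ "lift_end _ y", where 'r = 'r]
  by (auto simp: backtrack_red_def lift_vector_append add.assoc)

lemma homotopic_refl [simp]: "homotopic W W"
  by (simp add: homotopic_def)

lemma homotopic_lift:
  assumes "homotopic W W'"
  shows "lift_end W y = lift_end W' y \<and> (lift_vector W y :: 'f \<Rightarrow> 'r::comm_ring_1) = lift_vector W' y"
proof -
  have "(W, W') \<in> (backtrack_red \<union> backtrack_red\<inverse>)\<^sup>*"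
    using assms by (simp add: homotopic_def)
  then show ?thesis
  proof (induction arbitrary: y rule: rtrancl_induct)
    case (step W1 W2)
    then show ?case
      using lift_backtrack_red[of W1 W2 y, where 'r = 'r] by simp
  qed simp
qed

lemma lift_end_rev_walk: "lift_end (rev_walk W) (lift_end W y) = y"
  by (induction W arbitrary: y) (simp_all add: step_target_drev)

lemma lift_end_inj: "lift_end W a = lift_end W b \<Longrightarrow> a = b"
  by (metis lift_end_rev_walk)

lemma lift_end_map_pD: "is_walk H y A z \<Longrightarrow> lift_end (map pD A) y = z"
  by (induction A arbitrary: y) (auto simp: step_target_def step_lift_pD)

lemma lift_vector_map_pD: "is_walk H y A z \<Longrightarrow> lift_vector (map pD A) y = walk_vector A"
  by (induction A arbitrary: y) (auto simp: step_target_def step_vector_def step_lift_pD)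

lemma is_walk_map_pD: "is_walk H a A b \<Longrightarrow> is_walk G (pV a) (map pD A) (pV b)"
  by (induction A arbitrary: a) (auto simp: pV_in_verts pD_in_darts dstart_pD dend_pD)

lemma is_walk_lift:
  "y \<in> verts H \<Longrightarrow> is_walk G (pV y) B x \<Longrightarrow> \<exists>A z. is_walk H y A z \<and> map pD A = B \<and> pV z = x"
proof (induction B arbitrary: y)
  case Nil
  then show ?case by force
next
  case (Cons d ds)
  then have "liftable d y"
    by (simp add: liftable_def)
  note l = dart_lift[OF this]
  moreover have "pV (dend H (dart_lift d y)) = dend G d"
    using dend_pD[OF l(1)] l(3) by simp
  ultimately have "is_walk G (pV (dend H (dart_lift d y))) ds x"
    using Cons.prems by simp
  then obtain A z where "is_walk H (dend H (dart_lift d y)) A z" "map pD A = ds" "pV z = x"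
    using Cons.IH wf_digraph.dend_in_verts[OF wf_H l(1)] by blast
  then show ?case
    using l Cons.prems by (intro exI[of _ "dart_lift d y # A"] exI[of _ z]) simp
qed

lemma map_pD_rev_walk: "set A \<subseteq> darts H \<Longrightarrow> map pD (rev_walk A) = rev_walk (map pD A)"
  by (induction A) (auto simp: pD_drev)

lemma fst_pD: "d \<in> darts H \<Longrightarrow> fst (pD d) = fst (pD (fst d, True))"
proof -
  assume d: "d \<in> darts H"
  show ?thesis
  proof (cases "snd d")
    case False
    then have "d = drev (fst d, True)"
      by (simp add: drev_def prod_eq_iff)
    then show ?thesis
      using d pD_drev[of "(fst d, True)"] by (metis drev_in_darts fst_drev)
  qed (cases d, simp)
qed

lemma once_around_cycle_lift:
  assumes "is_walk H y A y" "once_around_cycle G x (map pD A)"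
  shows "once_around_cycle H y A"
proof -
  have darts: "set A \<subseteq> darts H"
    using assms(1) by (rule is_walk_darts)
  then have "map fst (map pD A) = map (\<lambda>e. fst (pD (e, True))) (map fst A)"
    using fst_pD by auto
  moreover have "map (dstart G) (map pD A) = map pV (map (dstart H) A)"
    using darts dstart_pD by auto
  ultimately have "distinct (map fst A)" "distinct (map (dstart H) A)"
    using assms(2) unfolding once_around_cycle_def by (metis distinct_map)+
  then show ?thesis
    using assms by (simp add: once_around_cycle_def)
qed

end

section \<open>The r-local covering\<close>

locale r_local_cover =
  fixes r :: nat and G :: "('v, 'e) pre_digraph" and x0 :: 'v
    and H :: "('w, 'f) pre_digraph" and y0 :: 'w
    and pV :: "'w \<Rightarrow> 'v" and pD :: "'f dart \<Rightarrow> 'e dart"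
  assumes r_local_covering: "r_local_covering r G x0 H y0 pV pD"
begin

sublocale covering G H pV pD
  using r_local_covering by (simp add: covering_def r_local_covering_def)

lemma connected_H: "connected_graph H"
  and y0_in_verts: "y0 \<in> verts H"
  and pV_y0: "pV y0 = x0"
  and pi1r_walks_iff: "is_walk G x0 W x0 \<Longrightarrow>
    W \<in> pi1r_walks G r x0 \<longleftrightarrow> (\<exists>W'. is_walk H y0 W' y0 \<and> homotopic (map pD W') W)"
  using r_local_covering by (simp_all add: r_local_covering_def)

text \<open>Prefixing a path from y0 turns the lasso into an element of pi_1^r, which lifts to a
  closed walk at y0; cancelling the common prefix shows that the lift of Q closes up.\<close>
lemma lift_short_cycle_closes:
  assumes "y \<in> verts H" "pV y = x0" "is_walk G x0 W0 x" "once_around_cycle G x Q" "length Q \<le> r"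
  shows "lift_end Q (lift_end W0 y) = lift_end W0 y"
proof -
  obtain P where P: "is_walk H y0 P y"
    using connected_H y0_in_verts assms(1) by (auto simp: connected_graph_def)
  define R where "R = map pD P @ W0"
  have R: "is_walk G x0 R x"
    using is_walk_map_pD[OF P] assms(2,3) pV_y0 by (auto simp: R_def is_walk_append)
  define L where "L = R @ Q @ rev_walk R"
  have "is_walk G x0 L x0"
    using R assms(4) is_walk_rev_walk[OF R] by (auto simp: L_def is_walk_append once_around_cycle_def)
  moreover have "r_lasso G r x0 L"
    using R assms(4,5) by (auto simp: r_lasso_def L_def)
  ultimately have "L \<in> pi1r_walks G r x0"
    by (auto simp: pi1r_walks_def intro!: exI[of _ "[L]"])
  then obtain W' where "is_walk H y0 W' y0" "homotopic (map pD W') L"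
    using pi1r_walks_iff \<open>is_walk G x0 L x0\<close> by blast
  then have "lift_end L y0 = y0"
    using homotopic_lift[of "map pD W'" L y0] lift_end_map_pD by fastforce
  moreover have "lift_end R y0 = lift_end W0 y"
    using lift_end_map_pD[OF P] by (simp add: R_def)
  ultimately have "lift_end (rev_walk R) (lift_end Q (lift_end W0 y))
      = lift_end (rev_walk R) (lift_end W0 y)"
    using lift_end_rev_walk[of R y0] by (simp add: L_def)
  then show ?thesis
    by (rule lift_end_inj)
qed

lemma lift_r_lasso:
  assumes "y \<in> verts H" "pV y = x0" "r_lasso G r x0 L"
  shows "lift_end L y = y \<and> lift_vector L y \<in> (cycle_space_r r H :: ('f \<Rightarrow> 'r::comm_ring_1) set)"
proof -
  obtain W0 x Q where W0: "is_walk G x0 W0 x" and Q: "once_around_cycle G x Q" "length Q \<le> r"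
    and L: "L = W0 @ Q @ rev_walk W0"
    using assms(3) by (auto simp: r_lasso_def)
  obtain A t where A: "is_walk H y A t" "map pD A = W0" "pV t = x"
    using is_walk_lift[OF assms(1)] W0 assms(2) by blast
  obtain C t' where C: "is_walk H t C t'" "map pD C = Q"
    using is_walk_lift[OF is_walk_end[OF A(1)], of Q x] A(3) Q(1) by (auto simp: once_around_cycle_def)
  have "t' = t"
    using lift_short_cycle_closes[OF assms(1,2) W0 Q] lift_end_map_pD A C by auto
  then have cycle: "once_around_cycle H t C"
    using once_around_cycle_lift[of t C x] C Q(1) by simp
  have rev_A: "rev_walk W0 = map pD (rev_walk A)"
    using map_pD_rev_walk[OF is_walk_darts[OF A(1)]] A(2) by simp
  have "lift_end L y = y"
    using lift_end_map_pD[OF A(1)] lift_end_map_pD[OF C(1)] lift_end_rev_walk[of W0 y] A(2) C(2) \<open>t' = t\<close>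
    by (simp add: L)
  moreover have "(lift_vector L y :: 'f \<Rightarrow> 'r) = walk_vector C"
  proof -
    have "(lift_vector W0 y :: 'f \<Rightarrow> 'r) = walk_vector A"
      unfolding A(2)[symmetric] by (rule lift_vector_map_pD[OF A(1)])
    moreover have "(lift_vector Q t :: 'f \<Rightarrow> 'r) = walk_vector C"
      unfolding C(2)[symmetric] by (rule lift_vector_map_pD[OF C(1)])
    moreover have "(lift_vector (rev_walk W0) t :: 'f \<Rightarrow> 'r) = walk_vector (rev_walk A)"
      unfolding rev_A by (rule lift_vector_map_pD[OF is_walk_rev_walk[OF A(1)]])
    ultimately show ?thesis
      using lift_end_map_pD[OF A(1)] lift_end_map_pD[OF C(1)] A(2) C(2) \<open>t' = t\<close>
      by (simp add: L lift_vector_append)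
  qed
  moreover have "(walk_vector C :: 'f \<Rightarrow> 'r) \<in> cycle_space_r r H"
    using cycle Q(2) C(2) cycle_vector_in_gen_submodule_iff[OF cycle]
    by (force simp: cycle_space_r_def intro: gen_submodule_base)
  ultimately show ?thesis
    by simp
qed

lemma lift_concat_r_lassos:
  assumes "\<forall>L\<in>set Ls. r_lasso G r x0 L" "y \<in> verts H" "pV y = x0"
  shows "lift_end (concat Ls) y = y
    \<and> lift_vector (concat Ls) y \<in> (cycle_space_r r H :: ('f \<Rightarrow> 'r::comm_ring_1) set)"
  using assms(1)
proof (induction Ls)
  case Nil
  then show ?case
    using gen_submodule.zero by (simp add: cycle_space_r_def zero_fun_def)
next
  case (Cons L Ls)
  then have "lift_end L y = y" "(lift_vector L y :: 'f \<Rightarrow> 'r) \<in> cycle_space_r r H"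
    using lift_r_lasso[OF assms(2,3)] by auto
  moreover have "lift_end (concat Ls) y = y"
    and "(lift_vector (concat Ls) y :: 'f \<Rightarrow> 'r) \<in> cycle_space_r r H"
    using Cons by auto
  ultimately show ?case
    by (simp add: lift_vector_append cycle_space_r_def gen_submodule_add del: plus_fun_apply)
qed

lemma closed_walk_vector_in_cycle_space_r:
  assumes "is_walk H v W v"
  shows "(walk_vector W :: 'f \<Rightarrow> 'r::comm_ring_1) \<in> cycle_space_r r H"
proof -
  obtain P where P: "is_walk H y0 P v"
    using connected_H y0_in_verts is_walk_start[OF assms] by (auto simp: connected_graph_def)
  define A where "A = P @ W @ rev_walk P"
  have A: "is_walk H y0 A y0"
    using P assms is_walk_rev_walk[OF P] by (auto simp: A_def is_walk_append)
  moreover have "is_walk G x0 (map pD A) x0"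
    using is_walk_map_pD[OF A] pV_y0 by simp
  ultimately have "map pD A \<in> pi1r_walks G r x0"
    using pi1r_walks_iff homotopic_refl by blast
  then obtain Ls where Ls: "\<forall>L\<in>set Ls. r_lasso G r x0 L" "homotopic (map pD A) (concat Ls)"
    by (auto simp: pi1r_walks_def)
  have "(walk_vector W :: 'f \<Rightarrow> 'r) = walk_vector A"
    by (simp add: A_def)
  also have "\<dots> = lift_vector (map pD A) y0"
    by (rule lift_vector_map_pD[OF A, symmetric])
  also have "\<dots> = lift_vector (concat Ls) y0"
    by (rule homotopic_lift[OF Ls(2), THEN conjunct2])
  also have "\<dots> \<in> cycle_space_r r H"
    by (rule lift_concat_r_lassos[OF Ls(1) y0_in_verts pV_y0, THEN conjunct2])
  finally show ?thesis .
qed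

theorem cycle_space_r_eq_cycle_space:
  "(cycle_space_r r H :: ('f \<Rightarrow> 'r::comm_ring_1) set) = cycle_space H"
proof
  show "cycle_space_r r H \<subseteq> cycle_space H"
    by (rule cycle_space_r_subset_cycle_space)
  have "{walk_vector C | C y. once_around_cycle H y C} \<subseteq> (cycle_space_r r H :: ('f \<Rightarrow> 'r) set)"
    using closed_walk_vector_in_cycle_space_r by (auto simp: once_around_cycle_def)
  then show "cycle_space H \<subseteq> (cycle_space_r r H :: ('f \<Rightarrow> 'r) set)"
    using cycle_space_subset_gen_cycles[OF wf_H] gen_submodule_subset
    unfolding cycle_space_r_def by blast
qed

end

theorem lemma4p6:
  fixes G :: "('v,'e) pre_digraph" and Gr :: "('w,'f) pre_digraph"
    and x0 :: 'v and y0 :: 'w and r :: nat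
    and pV :: "'w \<Rightarrow> 'v" and pD :: "'f dart \<Rightarrow> 'e dart"
  assumes "wf_digraph G" and "connected_graph G" and "x0 \<in> verts G"
    and "r_local_covering r G x0 Gr y0 pV pD"
  shows "(cycle_space_r r Gr :: ('f \<Rightarrow> int) set) = cycle_space Gr
       \<and> (cycle_space_r r Gr :: ('f \<Rightarrow> bit) set) = cycle_space Gr"
proof -
  interpret r_local_cover r G x0 Gr y0 pV pD
    using assms(4) by unfold_locales
  show ?thesis
    using cycle_space_r_eq_cycle_space[where 'r = int] cycle_space_r_eq_cycle_space[where 'r = bit]
    by (rule conjI)
qed

end
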